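(* Let $r\ge2$ and let $\{P,Q\}$ be a pair of $r$-patterns forming a mismatch. Then the family of all $\{P,Q\}$-cliques is reconstructible: if $M$ and $N$ are two distinct $\{P,Q\}$-cliques on the same ordered vertex set, then $\mathrm{tr}(M)\neq\mathrm{tr}(N)$.
   Context: An ordered $r$-matching is a set of pairwise disjoint $r$-element subsets (edges) of a linearly ordered vertex set covering it. An $r$-pattern is an ordered $r$-matching of size 2, written as a word over $\{A,B\}$ (each letter $r$ times, starting with $A$). Two edges form pattern $P$ if they induce a matching order-isomorphic to $P$; a $\mathcal P$-clique is an ordered matching all of whose pairs of edges form patterns in $\mathcal P$. An $r$-pattern is collectable if it splits into consecutive blocks $S_1\cdots S_s$ each of the form $A^tB^t$ or $B^tA^t$ ($t\ge1$); its composition is $(|S_1|/2,\dots,|S_s|/2)$. $\{P,Q\}$ is a mismatch if exactly one of them is collectable, or both are collectable with different compositions. The trace $\mathrm{tr}(M)$ of an ordered $r$-matching $M$ is the word over $[r]$ obtained by writing, at each vertex in order, the number $i$ if that vertex is the $i$-th vertex (from the left) of its edge. *)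

theory Defs
  imports Main
begin

text \<open>Letters: True = A, False = B. An r-pattern is a word of length 2r with
  r letters A and r letters B, starting with A.\<close>

definition is_pattern :: "nat \<Rightarrow> bool list \<Rightarrow> bool" where
  "is_pattern r P \<longleftrightarrow> length P = 2 * r \<and> count_list P True = r
     \<and> count_list P False = r \<and> P \<noteq> [] \<and> hd P = True"

definition ordered_matching :: "nat \<Rightarrow> 'a::linorder set \<Rightarrow> 'a set set \<Rightarrow> bool" where
  "ordered_matching r V M \<longleftrightarrow>
     (\<forall>e\<in>M. e \<subseteq> V \<and> card e = r) \<and>
     (\<forall>e\<in>M. \<forall>f\<in>M. e \<noteq> f \<longrightarrow> e \<inter> f = {}) \<and>
     \<Union>M = V"

definition pair_word :: "'a::linorder set \<Rightarrow> 'a set \<Rightarrow> bool list" where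
  "pair_word e f = map (\<lambda>x. x \<in> e) (sorted_list_of_set (e \<union> f))"

definition edge_pattern :: "'a::linorder set \<Rightarrow> 'a set \<Rightarrow> bool list" where
  "edge_pattern e f = (if Min e < Min f then pair_word e f else pair_word f e)"

definition is_clique :: "nat \<Rightarrow> 'a::linorder set \<Rightarrow> bool list set \<Rightarrow> 'a set set \<Rightarrow> bool" where
  "is_clique r V \<P> M \<longleftrightarrow> ordered_matching r V M \<and>
     (\<forall>e\<in>M. \<forall>f\<in>M. e \<noteq> f \<longrightarrow> edge_pattern e f \<in> \<P>)"

text \<open>Blocks: (x, t) stands for x^t (not x)^t, i.e. A^tB^t or B^tA^t.\<close>

definition block :: "bool \<times> nat \<Rightarrow> bool list" where
  "block b = replicate (snd b) (fst b) @ replicate (snd b) (\<not> fst b)"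

definition has_composition :: "bool list \<Rightarrow> nat list \<Rightarrow> bool" where
  "has_composition P c \<longleftrightarrow> (\<exists>bs. P = concat (map block bs) \<and>
      (\<forall>b\<in>set bs. snd b \<ge> 1) \<and> c = map snd bs)"

definition collectable :: "bool list \<Rightarrow> bool" where
  "collectable P \<longleftrightarrow> (\<exists>c. has_composition P c)"

definition mismatch :: "bool list \<Rightarrow> bool list \<Rightarrow> bool" where
  "mismatch P Q \<longleftrightarrow> (collectable P \<noteq> collectable Q) \<or>
     (collectable P \<and> collectable Q \<and> \<not> (\<exists>c. has_composition P c \<and> has_composition Q c))"

definition edge_of :: "'a set set \<Rightarrow> 'a \<Rightarrow> 'a set" where
  "edge_of M v = (THE e. e \<in> M \<and> v \<in> e)"

definition trace :: "'a::linorder set \<Rightarrow> 'a set set \<Rightarrow> nat list" where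
  "trace V M = map (\<lambda>v. card {u \<in> edge_of M v. u \<le> v}) (sorted_list_of_set V)"

end

(* If two {P, Q}-cliques M and N had the same trace, every vertex would have the same rank in its
   edge in both.  Let v be the first vertex whose earlier edge-mates differ in M and in N, let e
   and h be the edges through v in M and in N, and let f in M and g in N be edges that agree below
   v with h and with e.  The patterns of e, f and of g, h show that P and Q share a balanced
   prefix w of length 2K and differ right after it.  Because of this prefix, in every
   {P, Q}-clique all vertices of rank at most K precede all vertices of rank above K.  Cutting
   there, the heads form cliques of the single pattern w, which are determined by the ranks, and
   the tails form cliques of the normalised suffixes of P and Q, which again form a mismatch, of
   smaller uniformity; by induction the tails agree as well.  Finally the two suffixes differ even
   up to complementation, so the relative order of two edges is determined by their tails, and
   this forces M = N. *)

theory Submission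
  imports Defs
begin

section \<open>Balanced words and compositions\<close>

definition balanced :: "bool list \<Rightarrow> bool" where
  "balanced w \<longleftrightarrow> count_list w True = count_list w False"

(* hd [] is unspecified; normalize_word is only applied to nonempty words. *)
definition normalize_word :: "bool list \<Rightarrow> bool list" where
  "normalize_word w = (if hd w then w else map Not w)"

lemma count_list_map_Not: "count_list (map Not xs) b = count_list xs (\<not> b)"
  by (induction xs) auto

lemma length_eq_count_list_True_False:
  "length xs = count_list xs True + count_list xs False"
  by (induction xs) auto

lemma normalize_word_map_Not: "xs \<noteq> [] \<Longrightarrow> normalize_word (map Not xs) = normalize_word xs"
  by (cases xs) (auto simp: normalize_word_def comp_def)

lemma balanced_prefix_bound:
  assumes "count_list (take (2 * K) (u @ z)) True = K" "count_list (take (2 * K) (u @ z)) False = K"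
    and "count_list u False < K"
  shows "count_list u True \<le> K"
proof (cases "2 * K \<le> length u")
  case True
  have "count_list u False = count_list (take (2 * K) u) False + count_list (drop (2 * K) u) False"
    by (metis append_take_drop_id count_list_append)
  then have "count_list (take (2 * K) (u @ z)) False \<le> count_list u False" using True by simp
  then show ?thesis using assms by simp
next
  case False
  then have "count_list u True \<le> count_list (take (2 * K) (u @ z)) True" by simp
  then show ?thesis using assms by simp
qed

lemma count_list_replicate: "count_list (replicate n x) y = (if x = y then n else 0)"
  by (induction n) auto

lemma count_list_block: "count_list (block b) x = snd b"
  by (cases b) (auto simp: block_def count_list_replicate)

lemma proper_prefix_of_block_unbalanced:
  assumes "0 < n" "n < 2 * snd b"
  shows "\<not> balanced (take n (block b))"
proof -
  obtain x t where b: "b = (x, t)" by fastforce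
  have "take n (block b) = replicate (min n t) x @ replicate (n - t) (\<not> x)"
    using assms by (simp add: b block_def)
  then show ?thesis
    using assms by (cases x) (auto simp: b balanced_def count_list_replicate)
qed

lemma concat_blocks_split:
  assumes "concat (map block bs) = w @ s" "balanced w"
  shows "\<exists>bs1 bs2. bs = bs1 @ bs2 \<and> concat (map block bs1) = w \<and> concat (map block bs2) = s"
  using assms
proof (induction bs arbitrary: w)
  case (Cons b bs)
  show ?case
  proof (cases "length (block b) \<le> length w")
    case True
    then obtain w' where w': "w = block b @ w'" "concat (map block bs) = w' @ s"
      using Cons.prems(1) by (auto simp: append_eq_append_conv_if) (metis append_take_drop_id)
    have "balanced w'" using Cons.prems(2) w'(1) by (simp add: balanced_def count_list_block)
    then obtain bs1 bs2 where "bs = bs1 @ bs2" "concat (map block bs1) = w'" "concat (map block bs2) = s"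
      using Cons.IH[OF w'(2)] by blast
    then show ?thesis using w'(1) by (intro exI[of _ "b # bs1"] exI[of _ bs2]) auto
  next
    case False
    then have "w = take (length w) (block b)"
      using Cons.prems(1) by (simp add: append_eq_append_conv_if)
    then have "w = []"
      using Cons.prems(2) False proper_prefix_of_block_unbalanced[of "length w" b]
      by (auto simp: block_def)
    then show ?thesis using Cons.prems(1) by (intro exI[of _ "[]"] exI[of _ "b # bs"]) auto
  qed
qed simp

lemma has_composition_append:
  "has_composition w c \<Longrightarrow> has_composition s d \<Longrightarrow> has_composition (w @ s) (c @ d)"
  unfolding has_composition_def by (metis Un_iff concat_append map_append set_append)

lemma has_composition_append_balanced:
  assumes "balanced w" "has_composition (w @ s) c"
  obtains c1 c2 where "c = c1 @ c2" "has_composition w c1" "has_composition s c2"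
proof -
  obtain bs where bs: "w @ s = concat (map block bs)" "\<forall>b\<in>set bs. snd b \<ge> 1" "c = map snd bs"
    using assms(2) by (auto simp: has_composition_def)
  then obtain bs1 bs2 where "bs = bs1 @ bs2" "concat (map block bs1) = w" "concat (map block bs2) = s"
    using concat_blocks_split assms(1) by metis
  then show ?thesis
    using that[of "map snd bs1" "map snd bs2"] bs by (auto simp: has_composition_def)
qed

lemma has_composition_map_Not: "has_composition (map Not w) c \<longleftrightarrow> has_composition w c"
proof -
  have flip: "has_composition (map Not w) c" if hc: "has_composition w c" for w
  proof -
    obtain bs where bs: "w = concat (map block bs)" "\<forall>b\<in>set bs. snd b \<ge> 1" "c = map snd bs"
      using hc unfolding has_composition_def by blast
    have "map Not w = concat (map block (map (\<lambda>(x, t). (\<not> x, t)) bs))"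
      unfolding bs(1) by (induction bs) (auto simp: block_def)
    then show ?thesis
      using bs(2,3) unfolding has_composition_def
      by (intro exI[of _ "map (\<lambda>(x, t). (\<not> x, t)) bs"]) (auto simp: comp_def split_def)
  qed
  show ?thesis using flip[of w] flip[of "map Not w"] by (auto simp: comp_def)
qed

lemma has_composition_normalize_word:
  "has_composition (normalize_word w) c \<longleftrightarrow> has_composition w c"
  by (simp add: normalize_word_def has_composition_map_Not)

lemma mismatch_iff:
  "mismatch P Q \<longleftrightarrow>
     (collectable P \<or> collectable Q) \<and> \<not> (\<exists>c. has_composition P c \<and> has_composition Q c)"
  by (auto simp: mismatch_def collectable_def)

lemma not_mismatch_self: "\<not> mismatch P P"
  by (auto simp: mismatch_iff collectable_def)

lemma mismatch_normalize_word:
  "mismatch (normalize_word P) (normalize_word Q) \<longleftrightarrow> mismatch P Q"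
  by (simp add: mismatch_iff collectable_def has_composition_normalize_word)

lemma mismatch_append_balanced:
  assumes "balanced w" "mismatch (w @ s) (w @ t)"
  shows "mismatch s t"
proof -
  have suffix: "collectable s" and prefix: "collectable w" if "collectable (w @ s)" for s
    using that has_composition_append_balanced[OF assms(1)] by (metis collectable_def)+
  have "\<not> (has_composition s c \<and> has_composition t c)" for c
  proof
    assume "has_composition s c \<and> has_composition t c"
    moreover obtain c1 where "has_composition w c1"
      using assms(2) prefix by (auto simp: mismatch_iff collectable_def)
    ultimately show False
      using assms(2) has_composition_append unfolding mismatch_iff by blast
  qed
  then show ?thesis using assms(2) suffix by (auto simp: mismatch_iff)
qed

lemma is_pattern_normalize_word_drop:
  assumes "is_pattern r P" "count_list (take (2 * K) P) True = K"
    "count_list (take (2 * K) P) False = K" "K < r"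
  shows "is_pattern (r - K) (normalize_word (drop (2 * K) P))"
proof -
  define s where "s = drop (2 * K) P"
  have "count_list P b = count_list (take (2 * K) P) b + count_list s b" for b
    unfolding s_def by (metis append_take_drop_id count_list_append)
  then have counts: "count_list s b = r - K" for b
    using assms by (cases b) (auto simp: is_pattern_def)
  moreover have "s \<noteq> []" using assms by (auto simp: s_def is_pattern_def)
  moreover have "length s = 2 * (r - K)" using assms by (simp add: s_def is_pattern_def)
  ultimately show ?thesis
    by (auto simp: is_pattern_def normalize_word_def count_list_map_Not hd_map simp flip: s_def)
qed

lemma is_pattern_1: "is_pattern 1 P \<Longrightarrow> P = [True, False]"
  by (auto simp: is_pattern_def length_Suc_conv numeral_2_eq_2 split: if_splits)

lemma mismatch_suffixes:
  assumes "is_pattern r P" "is_pattern r Q" "mismatch P Q"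
    and "take (2 * K) P = w" "take (2 * K) Q = w" "count_list w True = K" "count_list w False = K"
    and "K < r"
  defines "P' \<equiv> normalize_word (drop (2 * K) P)" and "Q' \<equiv> normalize_word (drop (2 * K) Q)"
  shows "is_pattern (r - K) P'" "is_pattern (r - K) Q'" "mismatch P' Q'" "2 \<le> r - K"
proof -
  show patterns: "is_pattern (r - K) P'" "is_pattern (r - K) Q'"
    using assms is_pattern_normalize_word_drop by simp_all
  have "balanced w" using assms(6,7) by (simp add: balanced_def)
  moreover have "mismatch (w @ drop (2 * K) P) (w @ drop (2 * K) Q)"
    using assms(3-5) by (metis append_take_drop_id)
  ultimately show "mismatch P' Q'"
    by (simp add: P'_def Q'_def mismatch_append_balanced mismatch_normalize_word)
  show "2 \<le> r - K"
  proof (rule ccontr)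
    assume "\<not> 2 \<le> r - K"
    then have "r - K = 1" using assms(8) by simp
    then have "P' = Q'" using patterns is_pattern_1 by metis
    then show False using \<open>mismatch P' Q'\<close> not_mismatch_self by simp
  qed
qed

section \<open>Pair words and edge patterns\<close>

lemma sorted_list_of_set_Un_less:
  fixes A B :: "'a::linorder set"
  assumes "finite A" "finite B" "\<forall>x\<in>A. \<forall>y\<in>B. x < y"
  shows "sorted_list_of_set (A \<union> B) = sorted_list_of_set A @ sorted_list_of_set B"
proof -
  have "sorted_wrt (<) (sorted_list_of_set A @ sorted_list_of_set B)"
    using assms by (auto simp: sorted_wrt_append)
  then show ?thesis
    using assms by (metis set_append set_sorted_list_of_set sorted_list_of_set.idem_if_sorted_distinct strict_sorted_iff)
qed

lemma pair_word_split:
  fixes e f :: "'a::linorder set"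
  assumes "finite e" "finite f" "e \<union> f \<subseteq> A \<union> B" "\<forall>x\<in>A. \<forall>y\<in>B. x < y"
  shows "pair_word e f = pair_word (e \<inter> A) (f \<inter> A) @ pair_word (e \<inter> B) (f \<inter> B)"
proof -
  have parts: "e \<union> f = (e \<inter> A \<union> f \<inter> A) \<union> (e \<inter> B \<union> f \<inter> B)" using assms(3) by blast
  have "sorted_list_of_set (e \<union> f) =
      sorted_list_of_set (e \<inter> A \<union> f \<inter> A) @ sorted_list_of_set (e \<inter> B \<union> f \<inter> B)"
    unfolding parts by (rule sorted_list_of_set_Un_less) (use assms in auto)
  moreover have "x \<in> e \<longleftrightarrow> x \<in> e \<inter> A" if "x \<in> e \<inter> A \<union> f \<inter> A" for x using that by blast
  moreover have "x \<in> e \<longleftrightarrow> x \<in> e \<inter> B" if "x \<in> e \<inter> B \<union> f \<inter> B" for x using that by blast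
  ultimately show ?thesis
    using assms(1,2) unfolding pair_word_def by (auto intro!: map_cong)
qed

lemma length_pair_word: "finite e \<Longrightarrow> finite f \<Longrightarrow> length (pair_word e f) = card (e \<union> f)"
  by (simp add: pair_word_def)

lemma count_list_pair_word:
  assumes "finite e" "finite f" "e \<inter> f = {}"
  shows "count_list (pair_word e f) True = card e" "count_list (pair_word e f) False = card f"
proof -
  have "count_list (pair_word e f) b = card {x \<in> e \<union> f. b = (x \<in> e)}" for b
    using assms(1,2)
    by (simp add: pair_word_def count_list_eq_length_filter filter_map comp_def
        flip: distinct_card[OF distinct_filter[OF distinct_sorted_list_of_set]])
  moreover have "{x \<in> e \<union> f. x \<in> e} = e" "{x \<in> e \<union> f. x \<notin> e} = f" using assms(3) by auto
  ultimately show "count_list (pair_word e f) True = card e" "count_list (pair_word e f) False = card f"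
    by simp_all
qed

lemma pair_word_swap: "e \<inter> f = {} \<Longrightarrow> pair_word f e = map Not (pair_word e f)"
  unfolding pair_word_def by (cases "finite (e \<union> f)") (auto simp: Un_commute intro!: map_cong)

lemma hd_pair_word_least:
  assumes "finite e" "finite f" "v \<in> e \<union> f" "\<forall>x\<in>e \<union> f. v \<le> x"
  shows "pair_word e f \<noteq> []" "hd (pair_word e f) \<longleftrightarrow> v \<in> e"
proof -
  have "Min (e \<union> f) = v" using assms by (intro Min_eqI) auto
  then have "sorted_list_of_set (e \<union> f) = v # sorted_list_of_set (e \<union> f - {v})"
    using assms sorted_list_of_set_nonempty[of "e \<union> f"] by auto
  then show "pair_word e f \<noteq> []" "hd (pair_word e f) \<longleftrightarrow> v \<in> e"
    by (simp_all add: pair_word_def)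
qed

lemma edge_pattern_alt:
  "e \<inter> f = {} \<Longrightarrow>
     edge_pattern e f = (if Min e < Min f then pair_word e f else map Not (pair_word e f))"
  by (simp add: edge_pattern_def pair_word_swap)

lemma edge_pattern_commute:
  assumes "finite e" "finite f" "e \<noteq> {}" "f \<noteq> {}" "e \<inter> f = {}"
  shows "edge_pattern f e = edge_pattern e f"
proof -
  have "Min e \<noteq> Min f" using assms by (metis Min_in disjoint_iff)
  then show ?thesis by (auto simp: edge_pattern_def)
qed

lemma normalize_word_pair_word:
  assumes "finite e" "finite f" "e \<noteq> {}" "f \<noteq> {}" "e \<inter> f = {}"
  shows "normalize_word (pair_word e f) = edge_pattern e f"
proof -
  have mins: "Min e \<in> e" "Min f \<in> f" "Min e \<notin> f" "Min f \<notin> e"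
    using assms by (auto dest: Min_in)
  have "Min (e \<union> f) = min (Min e) (Min f)" using assms by (simp add: Min_Un)
  then have "Min (e \<union> f) \<in> e \<longleftrightarrow> Min e < Min f"
    using mins by (cases "Min e < Min f") (auto simp: min_def)
  moreover have "Min (e \<union> f) \<in> e \<union> f" using assms by (intro Min_in) auto
  then have "hd (pair_word e f) \<longleftrightarrow> Min (e \<union> f) \<in> e"
    using assms by (intro hd_pair_word_least) auto
  ultimately show ?thesis by (simp add: normalize_word_def edge_pattern_alt[OF assms(5)])
qed

lemma count_list_take_pair_word:
  assumes "e \<inter> f = {}" "\<And>b. count_list (take n (edge_pattern e f)) b = k"
  shows "count_list (take n (pair_word e f)) b = k"
  using assms(1) assms(2)[of b] assms(2)[of "\<not> b"]
  by (cases "Min e < Min f") (auto simp: edge_pattern_alt take_map count_list_map_Not)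

lemma balanced_edge_pattern:
  assumes "finite e" "finite f" "e \<inter> f = {}" "card e = card f"
  shows "balanced (edge_pattern e f)"
  using assms count_list_pair_word[of e f] count_list_pair_word[of f e]
  by (auto simp: balanced_def edge_pattern_def Int_commute)

lemma edge_pattern_nonempty: "finite e \<Longrightarrow> finite f \<Longrightarrow> e \<noteq> {} \<Longrightarrow> edge_pattern e f \<noteq> []"
  by (simp add: edge_pattern_def pair_word_def)

lemma Min_Int_initial_segment:
  fixes e :: "'a::linorder set"
  assumes "finite e" "e \<inter> A \<noteq> {}" "e \<subseteq> A \<union> B" "\<forall>x\<in>A. \<forall>y\<in>B. x < y"
  shows "Min (e \<inter> A) = Min e"
proof -
  have least: "Min (e \<inter> A) \<in> e \<inter> A" using assms(1,2) by (intro Min_in) auto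
  have "Min (e \<inter> A) \<le> y" if "y \<in> e" for y
  proof (cases "y \<in> A")
    case True
    then show ?thesis using that assms(1) by simp
  next
    case False
    then show ?thesis using that least assms(3,4) by (meson IntD2 UnE less_imp_le subsetD)
  qed
  then show ?thesis using least assms(1) by (intro Min_eqI[symmetric]) auto
qed

lemma edge_pattern_split:
  fixes e f :: "'a::linorder set"
  assumes "finite e" "finite f" "e \<inter> f = {}" "e \<inter> A \<noteq> {}" "f \<inter> A \<noteq> {}"
    and "e \<union> f \<subseteq> A \<union> B" "\<forall>x\<in>A. \<forall>y\<in>B. x < y"
  shows "edge_pattern e f = edge_pattern (e \<inter> A) (f \<inter> A) @
    (if Min e < Min f then pair_word (e \<inter> B) (f \<inter> B) else pair_word (f \<inter> B) (e \<inter> B))"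
proof -
  have "Min (e \<inter> A) = Min e" "Min (f \<inter> A) = Min f"
    using Min_Int_initial_segment[of e A B] Min_Int_initial_segment[of f A B] assms by auto
  moreover have "pair_word e f = pair_word (e \<inter> A) (f \<inter> A) @ pair_word (e \<inter> B) (f \<inter> B)"
    "pair_word f e = pair_word (f \<inter> A) (e \<inter> A) @ pair_word (f \<inter> B) (e \<inter> B)"
    using pair_word_split[of e f A B] pair_word_split[of f e A B] assms by auto
  ultimately show ?thesis by (simp add: edge_pattern_def)
qed

lemma edge_patterns_diverge:
  fixes e f g h :: "'a::linorder set"
  assumes fin: "finite e" "finite f" "finite g" "finite h"
    and disj: "e \<inter> f = {}" "g \<inter> h = {}"
    and below: "g \<inter> {..<v} = e \<inter> {..<v}" "h \<inter> {..<v} = f \<inter> {..<v}"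
    and ne: "e \<inter> {..<v} \<noteq> {}" "f \<inter> {..<v} \<noteq> {}"
    and v: "v \<in> e" "v \<in> h"
  obtains s t where "edge_pattern e f = edge_pattern (e \<inter> {..<v}) (f \<inter> {..<v}) @ s"
    "edge_pattern g h = edge_pattern (e \<inter> {..<v}) (f \<inter> {..<v}) @ t"
    "s \<noteq> []" "t \<noteq> []" "hd s \<noteq> hd t"
proof -
  let ?A = "{..<v}" and ?B = "{v..}"
  have cut: "\<forall>x\<in>?A. \<forall>y\<in>?B. x < y" "X \<subseteq> ?A \<union> ?B" for X :: "'a set" by auto
  have "Min g = Min (e \<inter> ?A)" "Min h = Min (f \<inter> ?A)"
    using Min_Int_initial_segment[OF _ _ cut(2) cut(1)] below ne fin by metis+
  moreover have "Min e = Min (e \<inter> ?A)" "Min f = Min (f \<inter> ?A)"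
    using Min_Int_initial_segment[OF _ _ cut(2) cut(1)] ne fin by metis+
  ultimately have split:
    "edge_pattern e f = edge_pattern (e \<inter> ?A) (f \<inter> ?A) @
       (if Min e < Min f then pair_word (e \<inter> ?B) (f \<inter> ?B) else pair_word (f \<inter> ?B) (e \<inter> ?B))"
    "edge_pattern g h = edge_pattern (e \<inter> ?A) (f \<inter> ?A) @
       (if Min e < Min f then pair_word (g \<inter> ?B) (h \<inter> ?B) else pair_word (h \<inter> ?B) (g \<inter> ?B))"
    using edge_pattern_split[OF _ _ _ _ _ cut(2) cut(1)] fin disj below ne by metis+
  have "pair_word (X \<inter> ?B) (Y \<inter> ?B) \<noteq> [] \<and> (hd (pair_word (X \<inter> ?B) (Y \<inter> ?B)) \<longleftrightarrow> v \<in> X)"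
    if "finite X" "finite Y" "v \<in> X \<union> Y" for X Y
    using hd_pair_word_least[of "X \<inter> ?B" "Y \<inter> ?B" v] that by auto
  moreover have "v \<notin> f" "v \<notin> g" using v disj by auto
  ultimately show ?thesis using that split fin v by auto
qed

section \<open>Ranks and ordered matchings\<close>

definition rank_in :: "'a::linorder set \<Rightarrow> 'a \<Rightarrow> nat" where
  "rank_in S x = card {y \<in> S. y \<le> x}"

definition vertex_rank :: "'a::linorder set set \<Rightarrow> 'a \<Rightarrow> nat" where
  "vertex_rank M v = rank_in (edge_of M v) v"

lemma trace_eq_iff:
  "finite V \<Longrightarrow> trace V M = trace V N \<longleftrightarrow> (\<forall>v\<in>V. vertex_rank M v = vertex_rank N v)"
  by (simp add: trace_def vertex_rank_def rank_in_def)

lemma rank_in_eq_card_Int_atMost: "rank_in S x = card (S \<inter> {..x})"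
  by (simp add: rank_in_def Int_def atMost_def)

lemma rank_in_mono: "finite S \<Longrightarrow> x \<le> y \<Longrightarrow> rank_in S x \<le> rank_in S y"
  unfolding rank_in_def by (rule card_mono) auto

lemma rank_in_eq_Suc_card_less:
  assumes "finite S" "x \<in> S"
  shows "rank_in S x = Suc (card {y \<in> S. y < x})"
proof -
  have "{y \<in> S. y \<le> x} = insert x {y \<in> S. y < x}" using assms by auto
  then show ?thesis using assms by (simp add: rank_in_def)
qed

lemma rank_in_less:
  assumes "finite S" "y \<in> S" "x < y"
  shows "rank_in S x < rank_in S y"
proof -
  have "rank_in S x \<le> card {z \<in> S. z < y}"
    unfolding rank_in_def using assms by (intro card_mono) auto
  then show ?thesis using rank_in_eq_Suc_card_less[OF assms(1,2)] by simp
qed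

lemma bij_betw_rank_in: "finite S \<Longrightarrow> bij_betw (rank_in S) S {1..card S}"
proof -
  assume S: "finite S"
  have inj: "inj_on (rank_in S) S"
    by (rule inj_onI, rule ccontr) (use S rank_in_less in \<open>fastforce simp: neq_iff\<close>)
  have "rank_in S x \<in> {1..card S}" if "x \<in> S" for x
    using rank_in_eq_Suc_card_less[OF S that] card_mono[OF S, of "{y \<in> S. y \<le> x}"]
    by (auto simp: rank_in_def)
  then have "rank_in S ` S = {1..card S}"
    by (intro card_subset_eq) (auto simp: card_image[OF inj])
  with inj show ?thesis by (simp add: bij_betw_def)
qed

lemma card_rank_in_le: "finite S \<Longrightarrow> card {x \<in> S. rank_in S x \<le> K} = min K (card S)"
proof -
  assume S: "finite S"
  have "rank_in S ` {x \<in> S. rank_in S x \<le> K} = {n \<in> rank_in S ` S. n \<le> K}" by auto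
  also have "\<dots> = {1..min K (card S)}"
    using bij_betw_rank_in[OF S] by (auto simp: bij_betw_def)
  moreover have "inj_on (rank_in S) {x \<in> S. rank_in S x \<le> K}"
    using bij_betw_rank_in[OF S] by (auto simp: bij_betw_def intro: inj_on_subset)
  ultimately show ?thesis by (metis card_image card_atLeastAtMost diff_Suc_1)
qed

lemma edge_of_eq:
  assumes "ordered_matching r V M" "e \<in> M" "v \<in> e"
  shows "edge_of M v = e"
  unfolding edge_of_def
proof (rule the_equality)
  show "e \<in> M \<and> v \<in> e" using assms(2,3) ..
  show "e' = e" if "e' \<in> M \<and> v \<in> e'" for e'
    using that assms unfolding ordered_matching_def by blast
qed

lemma edge_of_mem:
  assumes "ordered_matching r V M" "v \<in> V"
  shows "edge_of M v \<in> M" "v \<in> edge_of M v"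
proof -
  obtain e where "e \<in> M" "v \<in> e" using assms by (auto simp: ordered_matching_def)
  then show "edge_of M v \<in> M" "v \<in> edge_of M v" using edge_of_eq[OF assms(1)] by simp_all
qed

lemma mem_edge_of_commute:
  assumes M: "ordered_matching r V M" and "y \<in> V" "z \<in> V"
  shows "z \<in> edge_of M y \<longleftrightarrow> y \<in> edge_of M z"
proof -
  have same_edge: "v \<in> edge_of M u \<longleftrightarrow> edge_of M u = edge_of M v" if "u \<in> V" "v \<in> V" for u v
    using edge_of_eq[OF M edge_of_mem(1)[OF M that(1)]] edge_of_mem(2)[OF M that(2)] by auto
  show ?thesis using same_edge[of y z] same_edge[of z y] assms(2,3) by auto
qed

lemma edge_subset: "ordered_matching r V M \<Longrightarrow> e \<in> M \<Longrightarrow> e \<subseteq> V"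
  by (simp add: ordered_matching_def)

lemma finite_edge: "ordered_matching r V M \<Longrightarrow> finite V \<Longrightarrow> e \<in> M \<Longrightarrow> finite e"
  by (auto simp: ordered_matching_def intro: finite_subset)

lemma vertex_rank_eq_rank_in:
  "ordered_matching r V M \<Longrightarrow> e \<in> M \<Longrightarrow> v \<in> e \<Longrightarrow> vertex_rank M v = rank_in e v"
  by (simp add: vertex_rank_def edge_of_eq)

lemma ordered_matching_eq_image_edge_of:
  assumes "ordered_matching r V M" "0 < r"
  shows "M = edge_of M ` V"
proof
  show "edge_of M ` V \<subseteq> M" using edge_of_mem[OF assms(1)] by blast
  show "M \<subseteq> edge_of M ` V"
  proof
    fix e assume "e \<in> M"
    moreover obtain v where "v \<in> e" using assms \<open>e \<in> M\<close> by (fastforce simp: ordered_matching_def)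
    ultimately show "e \<in> edge_of M ` V"
      using assms(1) edge_of_eq[OF assms(1)] by (auto simp: ordered_matching_def)
  qed
qed

section \<open>The first divergence of two cliques with the same trace\<close>

definition earlier :: "'a::linorder set set \<Rightarrow> 'a \<Rightarrow> 'a set" where
  "earlier M v = edge_of M v \<inter> {..<v}"

lemma mem_edge_of_iff_if_earlier_eq:
  assumes M: "ordered_matching r V M" and N: "ordered_matching r V N" and "y \<in> V" "z \<in> V"
    and "earlier M y = earlier N y" "earlier M z = earlier N z"
  shows "z \<in> edge_of M y \<longleftrightarrow> z \<in> edge_of N y"
proof (cases z y rule: linorder_cases)
  case less
  then show ?thesis using assms(5) by (auto simp: earlier_def set_eq_iff)
next
  case equal
  then show ?thesis using edge_of_mem(2)[OF M assms(3)] edge_of_mem(2)[OF N assms(3)] by simp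
next
  case greater
  then have "y \<in> edge_of M z \<longleftrightarrow> y \<in> edge_of N z" using assms(6) by (auto simp: earlier_def set_eq_iff)
  then show ?thesis using mem_edge_of_commute[OF M] mem_edge_of_commute[OF N] assms(3,4) by metis
qed

lemma edge_of_eq_if_earlier_eq:
  assumes M: "ordered_matching r V M" and N: "ordered_matching r V N" and "y \<in> V"
    and "\<forall>u\<in>V. earlier M u = earlier N u"
  shows "edge_of M y = edge_of N y"
proof -
  have "edge_of M y \<subseteq> V" "edge_of N y \<subseteq> V"
    using edge_subset[OF M edge_of_mem(1)[OF M assms(3)]] edge_subset[OF N edge_of_mem(1)[OF N assms(3)]]
    by simp_all
  then show ?thesis
    using mem_edge_of_iff_if_earlier_eq[OF M N] assms(3,4) by blast
qed

lemma matching_eq_if_earlier_eq: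
  assumes M: "ordered_matching r V M" and N: "ordered_matching r V N" and "0 < r"
    and "\<forall>v\<in>V. earlier M v = earlier N v"
  shows "M = N"
  using ordered_matching_eq_image_edge_of[OF M] ordered_matching_eq_image_edge_of[OF N]
    edge_of_eq_if_earlier_eq[OF M N _ assms(4)] assms(3)
  by (metis image_cong)

lemma card_earlier:
  assumes "ordered_matching r V M" "finite V" "v \<in> V"
  shows "card (earlier M v) = vertex_rank M v - 1"
proof -
  have "earlier M v = {y \<in> edge_of M v. y < v}" by (auto simp: earlier_def)
  then show ?thesis
    using rank_in_eq_Suc_card_less[OF finite_edge[OF assms(1,2)] edge_of_mem(2)[OF assms(1,3)]]
      edge_of_mem(1)[OF assms(1,3)]
    by (simp add: vertex_rank_def)
qed

lemma edge_of_below_eq_earlier: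
  assumes M: "ordered_matching r V M" and N: "ordered_matching r V N" and "v \<in> V"
    and before: "\<forall>u\<in>V. u < v \<longrightarrow> earlier M u = earlier N u" and b: "b \<in> earlier N v"
  shows "edge_of M b \<inter> {..<v} = earlier N v"
proof -
  have "b \<in> edge_of N v" "b < v" using b by (auto simp: earlier_def)
  then have bV: "b \<in> V" and "edge_of N b = edge_of N v"
    using edge_subset[OF N edge_of_mem(1)[OF N assms(3)]] edge_of_eq[OF N edge_of_mem(1)[OF N assms(3)]]
    by auto
  moreover have "edge_of M b \<subseteq> V" "edge_of N b \<subseteq> V"
    using edge_subset[OF M edge_of_mem(1)[OF M bV]] edge_subset[OF N edge_of_mem(1)[OF N bV]]
    by simp_all
  ultimately show ?thesis
    using mem_edge_of_iff_if_earlier_eq[OF M N bV] before \<open>b < v\<close>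
    by (auto simp: earlier_def)
qed

lemma least_earlier_difference:
  assumes "finite V" "ordered_matching r V M" "ordered_matching r V N" "0 < r" "M \<noteq> N"
  obtains v where "v \<in> V" "earlier M v \<noteq> earlier N v"
    "\<forall>u\<in>V. u < v \<longrightarrow> earlier M u = earlier N u"
proof -
  let ?D = "{v \<in> V. earlier M v \<noteq> earlier N v}"
  have "finite ?D" using assms(1) by simp
  moreover have "?D \<noteq> {}" using matching_eq_if_earlier_eq assms(2-5) by blast
  ultimately have "Min ?D \<in> ?D" by (rule Min_in)
  moreover have "earlier M u = earlier N u" if "u \<in> V" "u < Min ?D" for u
  proof (rule ccontr)
    assume "earlier M u \<noteq> earlier N u"
    then have "Min ?D \<le> u" using \<open>finite ?D\<close> that(1) by simp
    then show False using that(2) by simp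
  qed
  ultimately show ?thesis using that by blast
qed

lemma first_divergence_edges:
  assumes fin: "finite V" and "0 < r" and M: "ordered_matching r V M" and N: "ordered_matching r V N"
    and ranks: "\<forall>v\<in>V. vertex_rank M v = vertex_rank N v" and "M \<noteq> N"
  obtains e f g h v where "e \<in> M" "f \<in> M" "g \<in> N" "h \<in> N" "v \<in> e" "v \<in> h"
    "g \<inter> {..<v} = e \<inter> {..<v}" "h \<inter> {..<v} = f \<inter> {..<v}"
    "e \<inter> {..<v} \<noteq> {}" "f \<inter> {..<v} \<noteq> {}" "card (e \<inter> {..<v}) = card (f \<inter> {..<v})"
    "e \<noteq> f" "g \<noteq> h"
proof -
  obtain v where v: "v \<in> V" "earlier M v \<noteq> earlier N v"
    and before: "\<forall>u\<in>V. u < v \<longrightarrow> earlier M u = earlier N u"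
    using least_earlier_difference[OF fin M N] assms by blast
  have fin_earlier: "finite (earlier M v)" "finite (earlier N v)"
    using finite_edge[OF M fin edge_of_mem(1)[OF M v(1)]] finite_edge[OF N fin edge_of_mem(1)[OF N v(1)]]
    by (simp_all add: earlier_def)
  have same_card: "card (earlier M v) = card (earlier N v)"
    using card_earlier[OF M fin v(1)] card_earlier[OF N fin v(1)] ranks v(1) by simp
  then have ne: "earlier M v \<noteq> {}" "earlier N v \<noteq> {}"
    using v(2) fin_earlier by (metis card_0_eq)+
  then obtain a b where a: "a \<in> earlier M v" and b: "b \<in> earlier N v" by blast
  \<comment> \<open>By minimality of v, the partner edges f and g copy the parts of h and e below v.\<close>
  define e f g h where "e = edge_of M v" and "f = edge_of M b" and "g = edge_of N a" and "h = edge_of N v"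
  have lower: "e \<inter> {..<v} = earlier M v" "h \<inter> {..<v} = earlier N v"
    "f \<inter> {..<v} = earlier N v" "g \<inter> {..<v} = earlier M v"
    using edge_of_below_eq_earlier[OF M N v(1) before b] before
      edge_of_below_eq_earlier[OF N M v(1) _ a]
    by (auto simp: e_def f_def g_def h_def earlier_def)
  have "a \<in> V" "b \<in> V"
    using a b edge_subset[OF M edge_of_mem(1)[OF M v(1)]] edge_subset[OF N edge_of_mem(1)[OF N v(1)]]
    by (auto simp: earlier_def)
  then have "e \<in> M" "f \<in> M" "g \<in> N" "h \<in> N" "v \<in> e" "v \<in> h"
    using edge_of_mem[OF M] edge_of_mem[OF N] v(1) by (simp_all add: e_def f_def g_def h_def)
  moreover have "e \<noteq> f" "g \<noteq> h" using lower v(2) by auto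
  ultimately show ?thesis using that[of e f g h v] lower ne same_card by simp
qed

lemma distinct_same_rank_cliques_diverge:
  assumes fin: "finite V" and "0 < r" and cM: "is_clique r V PP M" and cN: "is_clique r V PP N"
    and ranks: "\<forall>v\<in>V. vertex_rank M v = vertex_rank N v" and "M \<noteq> N"
  obtains w s t where "w @ s \<in> PP" "w @ t \<in> PP" "w \<noteq> []" "balanced w" "s \<noteq> []" "t \<noteq> []"
    "hd s \<noteq> hd t"
proof -
  have M: "ordered_matching r V M" and N: "ordered_matching r V N"
    using cM cN by (simp_all add: is_clique_def)
  obtain e f g h v where edges: "e \<in> M" "f \<in> M" "g \<in> N" "h \<in> N" "v \<in> e" "v \<in> h"
    and lower: "g \<inter> {..<v} = e \<inter> {..<v}" "h \<inter> {..<v} = f \<inter> {..<v}"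
    and ne: "e \<inter> {..<v} \<noteq> {}" "f \<inter> {..<v} \<noteq> {}"
    and same_card: "card (e \<inter> {..<v}) = card (f \<inter> {..<v})" and "e \<noteq> f" "g \<noteq> h"
    by (rule first_divergence_edges[OF fin assms(2) M N ranks assms(6)])
  then have disj: "e \<inter> f = {}" "g \<inter> h = {}"
    and pats: "edge_pattern e f \<in> PP" "edge_pattern g h \<in> PP"
    using M N cM cN by (simp_all add: ordered_matching_def is_clique_def)
  have fins: "finite e" "finite f" "finite g" "finite h"
    using edges finite_edge[OF M fin] finite_edge[OF N fin] by simp_all
  define w where "w = edge_pattern (e \<inter> {..<v}) (f \<inter> {..<v})"
  obtain s t where "edge_pattern e f = w @ s" "edge_pattern g h = w @ t"
    "s \<noteq> []" "t \<noteq> []" "hd s \<noteq> hd t"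
    using edge_patterns_diverge[OF fins disj lower ne edges(5,6)] unfolding w_def by blast
  moreover have "balanced w"
    unfolding w_def using fins disj same_card by (intro balanced_edge_pattern) auto
  moreover have "w \<noteq> []"
    unfolding w_def using fins ne by (intro edge_pattern_nonempty) auto
  ultimately show ?thesis using that pats by metis
qed

lemma same_rank_single_pattern_cliques_eq:
  assumes "finite V" "0 < r" "is_clique r V {R} M" "is_clique r V {R} N"
    and "\<forall>v\<in>V. vertex_rank M v = vertex_rank N v"
  shows "M = N"
proof (rule ccontr)
  assume "M \<noteq> N"
  then obtain w s t where "w @ s = R" "w @ t = R" "hd s \<noteq> hd t"
    using distinct_same_rank_cliques_diverge[OF assms] by blast
  then show False by auto
qed

section \<open>Cutting a clique at a rank\<close>

lemma ordered_matching_restrict: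
  assumes "ordered_matching r V M" "S \<subseteq> V" "\<forall>e\<in>M. card (e \<inter> S) = k"
  shows "ordered_matching k S ((\<lambda>e. e \<inter> S) ` M)"
  using assms unfolding ordered_matching_def by blast

locale matching_cut =
  fixes r K :: nat and V :: "'a::linorder set" and M :: "'a set set" and A B :: "'a set"
  assumes matching: "ordered_matching r V M" and finite: "finite V"
    and partition: "V = A \<union> B" and before: "\<forall>x\<in>A. \<forall>y\<in>B. x < y"
    and card_head: "\<And>e. e \<in> M \<Longrightarrow> card (e \<inter> A) = K"
    and K: "0 < K" "K < r"
begin

lemma finite_edge: "e \<in> M \<Longrightarrow> finite e"
  using finite_edge[OF matching finite] .

lemma finite_matching: "finite M"
  using matching finite by (auto simp: ordered_matching_def intro: finite_subset[of M "Pow V"])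

lemma disjoint: "e \<in> M \<Longrightarrow> f \<in> M \<Longrightarrow> e \<noteq> f \<Longrightarrow> e \<inter> f = {}"
  using matching by (simp add: ordered_matching_def)

lemma edge_split: "e \<in> M \<Longrightarrow> e = (e \<inter> A) \<union> (e \<inter> B)" "A \<inter> B = {}"
  using edge_subset[OF matching] partition before by blast+

lemma card_tail:
  assumes "e \<in> M" shows "card (e \<inter> B) = r - K"
proof -
  have "card e = card (e \<inter> A) + card (e \<inter> B)"
    using card_Un_disjoint[of "e \<inter> A" "e \<inter> B"] edge_split finite_edge assms by auto
  then show ?thesis using card_head assms matching by (simp add: ordered_matching_def)
qed

lemma head_nonempty: "e \<in> M \<Longrightarrow> e \<inter> A \<noteq> {}"
  using card_head K by fastforce

lemma tail_nonempty: "e \<in> M \<Longrightarrow> e \<inter> B \<noteq> {}"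
  using card_tail K by fastforce

lemma matching_heads: "ordered_matching K A ((\<lambda>e. e \<inter> A) ` M)"
  by (rule ordered_matching_restrict[OF matching]) (use partition card_head in auto)

lemma matching_tails: "ordered_matching (r - K) B ((\<lambda>e. e \<inter> B) ` M)"
  by (rule ordered_matching_restrict[OF matching]) (use partition card_tail in auto)

lemma vertex_rank_heads:
  assumes "v \<in> A" shows "vertex_rank ((\<lambda>e. e \<inter> A) ` M) v = vertex_rank M v"
proof -
  obtain e where e: "e \<in> M" "v \<in> e" using edge_of_mem[OF matching] partition assms by blast
  have "{y \<in> e \<inter> A. y \<le> v} = {y \<in> e. y \<le> v}"
    using edge_split(1)[OF e(1)] before assms by (auto dest: leD)
  then show ?thesis
    using e assms vertex_rank_eq_rank_in[OF matching_heads, of "e \<inter> A" v]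
      vertex_rank_eq_rank_in[OF matching]
    by (simp add: rank_in_def)
qed

lemma vertex_rank_tails:
  assumes "v \<in> B" shows "vertex_rank ((\<lambda>e. e \<inter> B) ` M) v = vertex_rank M v - K"
proof -
  obtain e where e: "e \<in> M" "v \<in> e" using edge_of_mem[OF matching] partition assms by blast
  have "{y \<in> e. y \<le> v} = (e \<inter> A) \<union> {y \<in> e \<inter> B. y \<le> v}"
    using edge_split(1)[OF e(1)] before assms by fastforce
  also have "card \<dots> = K + rank_in (e \<inter> B) v"
    using card_Un_disjoint[of "e \<inter> A" "{y \<in> e \<inter> B. y \<le> v}"] card_head[OF e(1)]
      finite_edge[OF e(1)] edge_split(2)
    by (auto simp: rank_in_def)
  finally show ?thesis
    using e assms vertex_rank_eq_rank_in[OF matching_tails, of "e \<inter> B" v]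
      vertex_rank_eq_rank_in[OF matching]
    by (simp add: rank_in_def)
qed

lemma edge_pattern_cut:
  assumes "e \<in> M" "f \<in> M" "e \<noteq> f"
  shows "take (2 * K) (edge_pattern e f) = edge_pattern (e \<inter> A) (f \<inter> A)"
    "drop (2 * K) (edge_pattern e f) =
       (if Min e < Min f then pair_word (e \<inter> B) (f \<inter> B) else pair_word (f \<inter> B) (e \<inter> B))"
proof -
  have disj: "e \<inter> f = {}" using disjoint assms by blast
  have "length (edge_pattern (e \<inter> A) (f \<inter> A)) = card (e \<inter> A \<union> f \<inter> A)"
    using assms finite_edge by (simp add: edge_pattern_def length_pair_word Un_commute)
  also have "\<dots> = card (e \<inter> A) + card (f \<inter> A)"
    by (rule card_Un_disjoint) (use disj finite_edge assms in auto)
  also have "\<dots> = 2 * K" using card_head assms by simp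
  finally have "length (edge_pattern (e \<inter> A) (f \<inter> A)) = 2 * K" .
  moreover have "e \<union> f \<subseteq> A \<union> B"
    using edge_subset[OF matching] assms partition by blast
  then have "edge_pattern e f = edge_pattern (e \<inter> A) (f \<inter> A) @
      (if Min e < Min f then pair_word (e \<inter> B) (f \<inter> B) else pair_word (f \<inter> B) (e \<inter> B))"
    using edge_pattern_split[OF _ _ disj _ _ _ before] assms finite_edge head_nonempty by blast
  ultimately show "take (2 * K) (edge_pattern e f) = edge_pattern (e \<inter> A) (f \<inter> A)"
    "drop (2 * K) (edge_pattern e f) =
       (if Min e < Min f then pair_word (e \<inter> B) (f \<inter> B) else pair_word (f \<inter> B) (e \<inter> B))"
    by simp_all
qed

lemma clique_heads:
  assumes "is_clique r V PP M"
  shows "is_clique K A (take (2 * K) ` PP) ((\<lambda>e. e \<inter> A) ` M)"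
  unfolding is_clique_def
proof (intro conjI matching_heads ballI impI)
  fix a b assume "a \<in> (\<lambda>e. e \<inter> A) ` M" "b \<in> (\<lambda>e. e \<inter> A) ` M" "a \<noteq> b"
  then obtain e f where ef: "e \<in> M" "f \<in> M" "e \<noteq> f" "a = e \<inter> A" "b = f \<inter> A" by blast
  then have "edge_pattern a b = take (2 * K) (edge_pattern e f)" using edge_pattern_cut(1) by simp
  moreover have "edge_pattern e f \<in> PP" using assms ef by (simp add: is_clique_def)
  ultimately show "edge_pattern a b \<in> take (2 * K) ` PP" by simp
qed

lemma clique_tails:
  assumes "is_clique r V PP M"
  shows "is_clique (r - K) B ((\<lambda>R. normalize_word (drop (2 * K) R)) ` PP) ((\<lambda>e. e \<inter> B) ` M)"
  unfolding is_clique_def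
proof (intro conjI matching_tails ballI impI)
  fix a b assume "a \<in> (\<lambda>e. e \<inter> B) ` M" "b \<in> (\<lambda>e. e \<inter> B) ` M" "a \<noteq> b"
  then obtain e f where ef: "e \<in> M" "f \<in> M" "e \<noteq> f" "a = e \<inter> B" "b = f \<inter> B" by blast
  have ab: "a \<inter> b = {}" "b \<inter> a = {}" "finite a" "finite b" "a \<noteq> {}" "b \<noteq> {}"
    using disjoint[OF ef(1-3)] finite_edge[OF ef(1)] finite_edge[OF ef(2)]
      tail_nonempty[OF ef(1)] tail_nonempty[OF ef(2)] ef(4,5)
    by auto
  have "drop (2 * K) (edge_pattern e f) = (if Min e < Min f then pair_word a b else pair_word b a)"
    using edge_pattern_cut(2)[OF ef(1-3)] ef(4,5) by simp
  then have "edge_pattern a b = normalize_word (drop (2 * K) (edge_pattern e f))"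
    using normalize_word_pair_word[of a b] normalize_word_pair_word[of b a] edge_pattern_commute[of a b] ab
    by simp
  moreover have "edge_pattern e f \<in> PP" using assms ef by (simp add: is_clique_def)
  ultimately show "edge_pattern a b \<in> (\<lambda>R. normalize_word (drop (2 * K) R)) ` PP" by (rule image_eqI)
qed

lemma inj_on_tails: "inj_on (\<lambda>e. e \<inter> B) M"
proof (rule inj_onI, rule ccontr)
  fix e f assume ef: "e \<in> M" "f \<in> M" "e \<inter> B = f \<inter> B" "e \<noteq> f"
  then show False using disjoint[OF ef(1,2,4)] tail_nonempty[OF ef(1)] by blast
qed

lemma Min_head: "e \<in> M \<Longrightarrow> Min (e \<inter> A) = Min e"
  using Min_Int_initial_segment[OF finite_edge head_nonempty _ before] edge_subset[OF matching] partition
  by simp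

lemma inj_on_Min: "inj_on Min M"
proof (rule inj_onI, rule ccontr)
  fix e f assume ef: "e \<in> M" "f \<in> M" "Min e = Min f" "e \<noteq> f"
  have "e \<noteq> {}" "f \<noteq> {}" using head_nonempty ef(1,2) by blast+
  then have "Min e \<in> e" "Min f \<in> f" using Min_in finite_edge ef(1,2) by blast+
  then show False using disjoint[OF ef(1,2,4)] ef(3) by (metis disjoint_iff)
qed

end

lemma vertex_rank_le_before_gt:
  assumes fin: "finite V" and clique: "is_clique r V PP M"
    and prefix: "\<And>R b. R \<in> PP \<Longrightarrow> count_list (take (2 * K) R) b = K"
    and "x \<in> V" "y \<in> V" "vertex_rank M x \<le> K" "K < vertex_rank M y"
  shows "x < y"
proof (rule ccontr)
  assume "\<not> x < y"
  have M: "ordered_matching r V M" using clique by (simp add: is_clique_def)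
  define e f where "e = edge_of M y" and "f = edge_of M x"
  have e: "e \<in> M" "y \<in> e" "finite e" and f: "f \<in> M" "x \<in> f" "finite f"
    using edge_of_mem[OF M] finite_edge[OF M fin] assms(4,5) by (auto simp: e_def f_def)
  have rank_y: "K < rank_in e y" and rank_x: "rank_in f x \<le> K"
    using assms(6,7) by (simp_all add: vertex_rank_def e_def f_def)
  have "e \<noteq> f"
  proof
    assume "e = f"
    then have "rank_in e y \<le> rank_in e x" using rank_in_mono[OF e(3)] \<open>\<not> x < y\<close> by simp
    then show False using rank_x rank_y \<open>e = f\<close> by simp
  qed
  then have disj: "e \<inter> f = {}" using M e f by (auto simp: ordered_matching_def)
  then have "y < x" using \<open>\<not> x < y\<close> e(2) f(2) by (auto simp: neq_iff)
  \<comment> \<open>The part ?U of the word of e and f up to y has more than K letters from e but fewer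
    than K from f, which the balanced prefix of length 2K forbids.\<close>
  let ?U = "pair_word (e \<inter> {..y}) (f \<inter> {..y})" and ?Z = "pair_word (e \<inter> {y<..}) (f \<inter> {y<..})"
  have word: "pair_word e f = ?U @ ?Z"
    using e f by (intro pair_word_split) auto
  have "count_list (take (2 * K) (edge_pattern e f)) b = K" for b
    using prefix clique \<open>e \<noteq> f\<close> e f by (simp add: is_clique_def)
  then have prefix_counts: "count_list (take (2 * K) (?U @ ?Z)) b = K" for b
    using count_list_take_pair_word[OF disj] word by metis
  have "count_list ?U False = card (f \<inter> {..y})"
    using count_list_pair_word(2)[of "e \<inter> {..y}" "f \<inter> {..y}"] disj e(3) f(3) by auto
  also have "\<dots> \<le> card {z \<in> f. z < x}"
    using \<open>y < x\<close> f by (intro card_mono) auto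
  also have "\<dots> < K" using rank_in_eq_Suc_card_less[OF f(3,2)] rank_x by simp
  finally have "count_list ?U True \<le> K"
    using balanced_prefix_bound prefix_counts by blast
  moreover have "count_list ?U True = rank_in e y"
    using count_list_pair_word(1)[of "e \<inter> {..y}" "f \<inter> {..y}"] disj e(3) f(3)
    by (auto simp: rank_in_eq_card_Int_atMost)
  ultimately show False using rank_y by simp
qed

lemma matching_cut_at_rank:
  assumes fin: "finite V" and clique: "is_clique r V PP M"
    and prefix: "\<And>R b. R \<in> PP \<Longrightarrow> count_list (take (2 * K) R) b = K"
    and "0 < K" "K < r"
  shows "matching_cut r K V M {v \<in> V. vertex_rank M v \<le> K} {v \<in> V. K < vertex_rank M v}"
proof
  show M: "ordered_matching r V M" using clique by (simp add: is_clique_def)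
  show "\<forall>x\<in>{v \<in> V. vertex_rank M v \<le> K}. \<forall>y\<in>{v \<in> V. K < vertex_rank M v}. x < y"
    using vertex_rank_le_before_gt[OF fin clique prefix] by blast
  fix e assume e: "e \<in> M"
  have "e \<inter> {v \<in> V. vertex_rank M v \<le> K} = {x \<in> e. rank_in e x \<le> K}"
    using edge_subset[OF M e] vertex_rank_eq_rank_in[OF M e] by auto
  then show "card (e \<inter> {v \<in> V. vertex_rank M v \<le> K}) = K"
    using card_rank_in_le[OF finite_edge[OF M fin e]] M e assms(5)
    by (simp add: ordered_matching_def)
qed (use assms in auto)

section \<open>Reassembling a clique from its two parts\<close>

lemma card_less_strict_mono:
  fixes a b :: "'a::linorder"
  assumes "finite I" "a \<in> I" "a < b"
  shows "card {z \<in> I. z < a} < card {z \<in> I. z < b}"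
  by (rule psubset_card_mono) (use assms in auto)

lemma eq_if_same_relative_order:
  fixes g h :: "'b \<Rightarrow> 'c::linorder"
  assumes S: "finite S" and inj: "inj_on g S" and img: "g ` S = h ` S"
    and order: "\<And>x y. x \<in> S \<Longrightarrow> y \<in> S \<Longrightarrow> g x < g y \<longleftrightarrow> h x < h y" and x: "x \<in> S"
  shows "g x = h x"
proof -
  have inj_h: "inj_on h S"
  proof (rule inj_onI)
    fix y z assume "y \<in> S" "z \<in> S" "h y = h z"
    then have "g y = g z" using order[of y z] order[of z y] by (auto simp: neq_iff)
    then show "y = z" using inj_onD[OF inj] \<open>y \<in> S\<close> \<open>z \<in> S\<close> by blast
  qed
  let ?I = "g ` S" and ?below = "{y \<in> S. g y < g x}"
  have "{z \<in> ?I. z < g x} = g ` ?below" by auto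
  moreover have "{z \<in> ?I. z < h x} = h ` ?below" unfolding img using order x by auto
  moreover have "card (g ` ?below) = card ?below" by (rule card_image[OF inj_on_subset[OF inj]]) auto
  moreover have "card (h ` ?below) = card ?below" by (rule card_image[OF inj_on_subset[OF inj_h]]) auto
  ultimately have same_card: "card {z \<in> ?I. z < g x} = card {z \<in> ?I. z < h x}" by simp
  show ?thesis
  proof (rule ccontr)
    assume "g x \<noteq> h x"
    moreover have "finite ?I" "g x \<in> ?I" "h x \<in> ?I" using S x img by auto
    ultimately show False
      using card_less_strict_mono[of ?I "g x" "h x"] card_less_strict_mono[of ?I "h x" "g x"] same_card
      by (auto simp: neq_iff)
  qed
qed

lemma tail_partner:
  assumes cM: "matching_cut r K V M A B" and cN: "matching_cut r K V N A B"
    and tails: "(\<lambda>e. e \<inter> B) ` M = (\<lambda>e. e \<inter> B) ` N"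
  obtains \<phi> where "\<phi> ` M = N" "\<And>e. e \<in> M \<Longrightarrow> \<phi> e \<in> N" "\<And>e. e \<in> M \<Longrightarrow> \<phi> e \<inter> B = e \<inter> B"
proof
  interpret N: matching_cut r K V N A B by (fact cN)
  define \<phi> where "\<phi> = the_inv_into N (\<lambda>e. e \<inter> B) \<circ> (\<lambda>e. e \<inter> B)"
  show \<phi>: "\<phi> e \<in> N" "\<phi> e \<inter> B = e \<inter> B" if "e \<in> M" for e
  proof -
    have "e \<inter> B \<in> (\<lambda>e. e \<inter> B) ` N" using tails that by blast
    then show "\<phi> e \<in> N" "\<phi> e \<inter> B = e \<inter> B"
      using the_inv_into_into[OF N.inj_on_tails _ subset_refl] f_the_inv_into_f[OF N.inj_on_tails]
      by (simp_all add: \<phi>_def)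
  qed
  show "\<phi> ` M = N"
  proof
    show "\<phi> ` M \<subseteq> N" using \<phi> by blast
    show "N \<subseteq> \<phi> ` M"
    proof
      fix e' assume "e' \<in> N"
      then obtain e where e: "e \<in> M" "e \<inter> B = e' \<inter> B" using tails by (metis imageE imageI)
      then have "\<phi> e \<inter> B = e' \<inter> B" using \<phi>(2) by simp
      then have "\<phi> e = e'" by (rule inj_onD[OF N.inj_on_tails _ \<phi>(1)[OF e(1)] \<open>e' \<in> N\<close>])
      then show "e' \<in> \<phi> ` M" using e(1) by blast
    qed
  qed
qed

lemma Min_image_eq_if_heads_eq:
  assumes cM: "matching_cut r K V M A B" and cN: "matching_cut r K V N A B"
    and heads: "(\<lambda>e. e \<inter> A) ` M = (\<lambda>e. e \<inter> A) ` N"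
  shows "Min ` M = Min ` N"
proof -
  interpret M: matching_cut r K V M A B by (fact cM)
  interpret N: matching_cut r K V N A B by (fact cN)
  have Min_image: "Min ` X = Min ` ((\<lambda>e. e \<inter> A) ` X)"
    if "\<And>e. e \<in> X \<Longrightarrow> Min (e \<inter> A) = Min e" for X
    unfolding image_image by (rule image_cong) (simp_all add: that)
  have "Min ` M = Min ` ((\<lambda>e. e \<inter> A) ` M)" using Min_image M.Min_head by blast
  also have "\<dots> = Min ` N" unfolding heads using Min_image N.Min_head by blast
  finally show ?thesis .
qed

lemma matching_subset_if_parts_eq:
  assumes cM: "matching_cut r K V M A B" and cN: "matching_cut r K V N A B"
    and heads: "(\<lambda>e. e \<inter> A) ` M = (\<lambda>e. e \<inter> A) ` N"
    and tails: "(\<lambda>e. e \<inter> B) ` M = (\<lambda>e. e \<inter> B) ` N"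
    and orient: "\<And>e f e' f'. e \<in> M \<Longrightarrow> f \<in> M \<Longrightarrow> e' \<in> N \<Longrightarrow> f' \<in> N \<Longrightarrow> e \<noteq> f \<Longrightarrow>
       e \<inter> B = e' \<inter> B \<Longrightarrow> f \<inter> B = f' \<inter> B \<Longrightarrow> Min e < Min f \<longleftrightarrow> Min e' < Min f'"
  shows "M \<subseteq> N"
proof
  interpret M: matching_cut r K V M A B by (fact cM)
  interpret N: matching_cut r K V N A B by (fact cN)
  \<comment> \<open>\<phi> pairs each edge of M with the edge of N having the same tail.  It preserves the
    order of the minima and, the heads being the same, the set of minima; so it fixes them.\<close>
  obtain \<phi> where \<phi>: "\<phi> ` M = N" "\<And>e. e \<in> M \<Longrightarrow> \<phi> e \<in> N" "\<And>e. e \<in> M \<Longrightarrow> \<phi> e \<inter> B = e \<inter> B"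
    using tail_partner[OF cM cN tails] by blast
  have img: "Min ` M = (Min \<circ> \<phi>) ` M"
    unfolding image_comp[symmetric] \<phi>(1) by (rule Min_image_eq_if_heads_eq[OF cM cN heads])
  have order: "Min x < Min y \<longleftrightarrow> (Min \<circ> \<phi>) x < (Min \<circ> \<phi>) y" if "x \<in> M" "y \<in> M" for x y
    using orient[OF that \<phi>(2)[OF that(1)] \<phi>(2)[OF that(2)] _ \<phi>(3)[OF that(1), symmetric]
        \<phi>(3)[OF that(2), symmetric]]
    by (cases "x = y") simp_all
  have same_Min: "Min e = Min (\<phi> e)" if "e \<in> M" for e
    using eq_if_same_relative_order[OF M.finite_matching M.inj_on_Min img order that] by simp
  fix e assume e: "e \<in> M"
  have "\<phi> e \<inter> A \<in> (\<lambda>e. e \<inter> A) ` M" unfolding heads using \<phi>(2)[OF e] by blast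
  then obtain e'' where e'': "e'' \<in> M" "e'' \<inter> A = \<phi> e \<inter> A" by auto
  then have "Min e'' = Min e"
    using M.Min_head[OF e''(1)] N.Min_head[OF \<phi>(2)[OF e]] same_Min[OF e] by simp
  then have "e'' = e" by (rule inj_onD[OF M.inj_on_Min _ e''(1) e])
  then have "\<phi> e = (e \<inter> A) \<union> (e \<inter> B)"
    using e''(2) \<phi>(3)[OF e] N.edge_split(1)[OF \<phi>(2)[OF e]] by simp
  then show "e \<in> N" using \<phi>(2)[OF e] M.edge_split(1)[OF e] by simp
qed

lemma orientation_agrees:
  assumes cM: "matching_cut r K V M A B" and cN: "matching_cut r K V N A B"
    and clM: "is_clique r V PP M" and clN: "is_clique r V PP N"
    and inj: "inj_on (\<lambda>R. normalize_word (drop (2 * K) R)) PP"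
    and "e \<in> M" "f \<in> M" "e' \<in> N" "f' \<in> N" "e \<noteq> f"
    and tails: "e \<inter> B = e' \<inter> B" "f \<inter> B = f' \<inter> B"
  shows "Min e < Min f \<longleftrightarrow> Min e' < Min f'"
proof (rule ccontr)
  interpret M: matching_cut r K V M A B by (fact cM)
  interpret N: matching_cut r K V N A B by (fact cN)
  assume differ: "\<not> (Min e < Min f \<longleftrightarrow> Min e' < Min f')"
  \<comment> \<open>Then the tail parts of the two patterns are complementary, hence equal after
    normalisation, which injectivity turns into equal patterns.\<close>
  have ef: "e \<in> M" "f \<in> M" "e \<noteq> f" and ef': "e' \<in> N" "f' \<in> N" by fact+
  have "e' \<noteq> f'"
  proof
    assume "e' = f'"
    then have "e \<inter> B = f \<inter> B" using tails by simp
    then show False using inj_onD[OF M.inj_on_tails _ ef(1,2)] ef(3) by blast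
  qed
  let ?p = "pair_word (e \<inter> B) (f \<inter> B)"
  have "?p \<noteq> []"
    using M.tail_nonempty[OF ef(1)] M.finite_edge[OF ef(1)] M.finite_edge[OF ef(2)]
    by (simp add: pair_word_def)
  have swap: "pair_word (f \<inter> B) (e \<inter> B) = map Not ?p"
    using M.disjoint[OF ef] by (intro pair_word_swap) blast
  define X Y where "X = drop (2 * K) (edge_pattern e f)" and "Y = drop (2 * K) (edge_pattern e' f')"
  have "Y = map Not X"
    using M.edge_pattern_cut(2)[OF ef] N.edge_pattern_cut(2)[OF ef' \<open>e' \<noteq> f'\<close>] tails differ swap
    by (auto simp: X_def Y_def comp_def)
  moreover have "X \<noteq> []" using M.edge_pattern_cut(2)[OF ef] \<open>?p \<noteq> []\<close> swap by (simp add: X_def)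
  ultimately have "normalize_word Y = normalize_word X" by (simp add: normalize_word_map_Not)
  moreover have "edge_pattern e' f' \<in> PP" "edge_pattern e f \<in> PP"
    using clM clN ef ef' \<open>e' \<noteq> f'\<close> by (simp_all add: is_clique_def)
  ultimately have "edge_pattern e' f' = edge_pattern e f"
    unfolding X_def Y_def by (rule inj_onD[OF inj])
  then have "X = map Not X" using \<open>Y = map Not X\<close> by (simp add: X_def Y_def)
  then show False using \<open>X \<noteq> []\<close> by (cases X) auto
qed

lemma cliques_eq_if_parts_eq:
  assumes cM: "matching_cut r K V M A B" and cN: "matching_cut r K V N A B"
    and clM: "is_clique r V PP M" and clN: "is_clique r V PP N"
    and inj: "inj_on (\<lambda>R. normalize_word (drop (2 * K) R)) PP"
    and heads: "(\<lambda>e. e \<inter> A) ` M = (\<lambda>e. e \<inter> A) ` N"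
    and tails: "(\<lambda>e. e \<inter> B) ` M = (\<lambda>e. e \<inter> B) ` N"
  shows "M = N"
proof
  show "M \<subseteq> N"
    by (rule matching_subset_if_parts_eq[OF cM cN heads tails orientation_agrees[OF cM cN clM clN inj]])
  show "N \<subseteq> M"
    by (rule matching_subset_if_parts_eq[OF cN cM heads[symmetric] tails[symmetric]
          orientation_agrees[OF cN cM clN clM inj]])
qed

section \<open>Induction on the uniformity\<close>

lemma common_balanced_prefix:
  assumes "is_pattern r P" "is_pattern r Q" "w @ s \<in> {P, Q}" "w @ t \<in> {P, Q}"
    and "w \<noteq> []" "balanced w" "s \<noteq> []" "t \<noteq> []" "hd s \<noteq> hd t"
  obtains K where "take (2 * K) P = w" "take (2 * K) Q = w"
    "count_list w True = K" "count_list w False = K" "0 < K" "K < r"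
proof -
  define K where "K = count_list w True"
  have length_w: "length w = 2 * K"
    using length_eq_count_list_True_False[of w] assms(6) by (simp add: balanced_def K_def)
  have "w @ s \<noteq> w @ t" using assms(9) by auto
  then have PQ: "P \<in> {w @ s, w @ t}" "Q \<in> {w @ s, w @ t}" using assms(3,4) by auto
  then have "take (2 * K) P = w" "take (2 * K) Q = w" using length_w by auto
  moreover have "count_list w True = K" "count_list w False = K"
    using assms(6) by (simp_all add: K_def balanced_def)
  moreover have "0 < K" using length_w assms(5) by (cases K) auto
  moreover have "length w < length P" using PQ(1) assms(7,8) by auto
  then have "K < r" using assms(1) length_w by (simp add: is_pattern_def)
  ultimately show ?thesis by (rule that)
qed

lemma same_rank_cliques_cut:
  assumes fin: "finite V" and clM: "is_clique r V PP M" and clN: "is_clique r V PP N"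
    and ranks: "\<forall>v\<in>V. vertex_rank M v = vertex_rank N v"
    and prefix: "\<And>R b. R \<in> PP \<Longrightarrow> count_list (take (2 * K) R) b = K" and K: "0 < K" "K < r"
  obtains A B where "matching_cut r K V M A B" "matching_cut r K V N A B"
proof
  show "matching_cut r K V M {v \<in> V. vertex_rank M v \<le> K} {v \<in> V. K < vertex_rank M v}"
    by (rule matching_cut_at_rank[OF fin clM prefix K])
  have "{v \<in> V. vertex_rank M v \<le> K} = {v \<in> V. vertex_rank N v \<le> K}"
    "{v \<in> V. K < vertex_rank M v} = {v \<in> V. K < vertex_rank N v}"
    using ranks by auto
  then show "matching_cut r K V N {v \<in> V. vertex_rank M v \<le> K} {v \<in> V. K < vertex_rank M v}"
    using matching_cut_at_rank[OF fin clN prefix K] by simp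
qed

lemma same_rank_heads_eq:
  assumes cM: "matching_cut r K V M A B" and cN: "matching_cut r K V N A B"
    and clM: "is_clique r V PP M" and clN: "is_clique r V PP N"
    and ranks: "\<forall>v\<in>V. vertex_rank M v = vertex_rank N v" and prefix: "take (2 * K) ` PP = {w}"
  shows "(\<lambda>e. e \<inter> A) ` M = (\<lambda>e. e \<inter> A) ` N"
proof (rule same_rank_single_pattern_cliques_eq)
  interpret M: matching_cut r K V M A B by (fact cM)
  interpret N: matching_cut r K V N A B by (fact cN)
  show "finite A" "0 < K" using M.finite M.partition M.K by auto
  show "is_clique K A {w} ((\<lambda>e. e \<inter> A) ` M)" "is_clique K A {w} ((\<lambda>e. e \<inter> A) ` N)"
    using M.clique_heads[OF clM] N.clique_heads[OF clN] prefix by simp_all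
  show "\<forall>v\<in>A. vertex_rank ((\<lambda>e. e \<inter> A) ` M) v = vertex_rank ((\<lambda>e. e \<inter> A) ` N) v"
    using M.vertex_rank_heads N.vertex_rank_heads ranks M.partition by auto
qed

lemma same_rank_cliques_eq:
  assumes "2 \<le> r" "is_pattern r P" "is_pattern r Q" "mismatch P Q" "finite V"
    and "is_clique r V {P, Q} M" "is_clique r V {P, Q} N"
    and "\<forall>v\<in>V. vertex_rank M v = vertex_rank N v"
  shows "M = N"
  using assms
proof (induction r arbitrary: P Q V M N rule: less_induct)
  case (less r)
  note fin = less.prems(5) and clM = less.prems(6) and clN = less.prems(7)
    and ranks = less.prems(8)
  show "M = N"
  proof (rule ccontr)
    assume "M \<noteq> N"
    then obtain w s t where wst: "w @ s \<in> {P, Q}" "w @ t \<in> {P, Q}" "w \<noteq> []" "balanced w"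
      "s \<noteq> []" "t \<noteq> []" "hd s \<noteq> hd t"
      using distinct_same_rank_cliques_diverge[OF fin _ clM clN ranks] less.prems(1) by auto
    then obtain K where K: "take (2 * K) P = w" "take (2 * K) Q = w"
      "count_list w True = K" "count_list w False = K" "0 < K" "K < r"
      using common_balanced_prefix[OF less.prems(2,3) wst] by blast
    then have "count_list (take (2 * K) R) b = K" if "R \<in> {P, Q}" for R b
      using that by (cases b) auto
    then obtain A B where cM: "matching_cut r K V M A B" and cN: "matching_cut r K V N A B"
      using same_rank_cliques_cut[OF fin clM clN ranks _ K(5,6)] by blast
    interpret M: matching_cut r K V M A B by (fact cM)
    interpret N: matching_cut r K V N A B by (fact cN)
    define P' Q' where "P' = normalize_word (drop (2 * K) P)" and "Q' = normalize_word (drop (2 * K) Q)"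
    have suffixes: "is_pattern (r - K) P'" "is_pattern (r - K) Q'" "mismatch P' Q'" "2 \<le> r - K"
      using mismatch_suffixes[OF less.prems(2-4) K(1-4,6)] by (simp_all add: P'_def Q'_def)
    have "(\<lambda>e. e \<inter> B) ` M = (\<lambda>e. e \<inter> B) ` N"
    proof (rule less.IH[of "r - K" P' Q'])
      show "is_clique (r - K) B {P', Q'} ((\<lambda>e. e \<inter> B) ` M)"
        "is_clique (r - K) B {P', Q'} ((\<lambda>e. e \<inter> B) ` N)"
        using M.clique_tails[OF clM] N.clique_tails[OF clN] by (simp_all add: P'_def Q'_def)
      show "\<forall>v\<in>B. vertex_rank ((\<lambda>e. e \<inter> B) ` M) v = vertex_rank ((\<lambda>e. e \<inter> B) ` N) v"
        using M.vertex_rank_tails N.vertex_rank_tails ranks M.partition by auto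
    qed (use K(5,6) suffixes fin M.partition in auto)
    moreover have "(\<lambda>e. e \<inter> A) ` M = (\<lambda>e. e \<inter> A) ` N"
      using same_rank_heads_eq[OF cM cN clM clN ranks] K(1,2) by simp
    moreover have "inj_on (\<lambda>R. normalize_word (drop (2 * K) R)) {P, Q}"
      using suffixes(3) not_mismatch_self by (auto simp: P'_def Q'_def)
    ultimately show False
      using cliques_eq_if_parts_eq[OF cM cN clM clN] \<open>M \<noteq> N\<close> by blast
  qed
qed

theorem mainTheorem9:
  fixes r :: nat and P Q :: "bool list" and V :: "'a::linorder set" and M N :: "'a set set"
  assumes "r \<ge> 2"
    and "is_pattern r P" and "is_pattern r Q"
    and "mismatch P Q"
    and "finite V"
    and "is_clique r V {P, Q} M" and "is_clique r V {P, Q} N"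
    and "M \<noteq> N"
  shows "trace V M \<noteq> trace V N"
  using same_rank_cliques_eq[OF assms(1-7)] trace_eq_iff[OF assms(5)] assms(8) by blast

end
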